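(* Let $X$ be a normed linear space, $F:X\rightrightarrows\mathbb{R}^p$, $(x,y)\in\mathrm{gph}F$, with $F$ Lipschitz around $x$ and $y\in\mathcal{PE}(F(x),P)$, and let $S$ be a nonempty compact subset of $X\times\mathbb{R}^p$. Assume $$0\in\mathcal{E}\Big(\mathrm{cl}\Big(\bigcup_{(v,w)\in S}\big(w+D_\uparrow F((x,y);v)\big)\Big),P\Big)+P.$$ Then there exists $(v,w)\in S$ such that $-w\in DF_\uparrow((x,y);v)$.
   Context: $P\subset\mathbb{R}^p$ is a closed convex pointed cone containing $0$ with nonempty interior; $F_\uparrow(x)=F(x)+P$. $\mathcal{E}(S,P)=\{y\in S:(y-P)\cap S=\{y\}\}$; contingent cone $T_S(z)=\{v:\exists h_k\to0^+,\exists v_k\to v,z+h_kv_k\in S\}$; $\mathcal{PE}(S,P)=\{y\in\mathcal{E}(S,P):T_{S+P}(y)\cap(-P)=\{0\}\}$. $F$ is Lipschitz around $x$ if there are $l>0$ and a neighborhood $\mathcal{O}$ of $x$ with $F(x_1)\subset F(x_2)+l\|x_1-x_2\|\mathbf{B}$ for $x_1,x_2\in\mathcal{O}$. Contingent derivative $DF(x,y)$: graph $T_{\mathrm{gph}F}(x,y)$, value at $v$ written $DF((x,y);v)$. Generalized contingent epiderivative: $D_\uparrow F((x,y);v)=\mathcal{E}(DF_\uparrow((x,y);v),P)$ (empty if no minimal element exists). *)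

theory Defs
  imports "HOL-Analysis.Analysis"
begin

definition ordering_cone :: "'b::euclidean_space set \<Rightarrow> bool" where
  "ordering_cone P \<longleftrightarrow> closed P \<and> convex P \<and> cone P \<and> 0 \<in> P \<and>
     P \<inter> uminus ` P = {0} \<and> interior P \<noteq> {}"

definition setplus :: "'b::ab_group_add set \<Rightarrow> 'b set \<Rightarrow> 'b set" (infixl "\<oplus>s" 65) where
  "A \<oplus>s B = {a + b | a b. a \<in> A \<and> b \<in> B}"

definition upper :: "('a \<Rightarrow> 'b::ab_group_add set) \<Rightarrow> 'b set \<Rightarrow> 'a \<Rightarrow> 'b set" where
  "upper F P x = F x \<oplus>s P"

definition eff :: "'b::ab_group_add set \<Rightarrow> 'b set \<Rightarrow> 'b set" where
  "eff S P = {y \<in> S. {y - q | q. q \<in> P} \<inter> S = {y}}"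

definition contingent :: "'c::real_normed_vector set \<Rightarrow> 'c \<Rightarrow> 'c set" where
  "contingent S z = {v. \<exists>h u. (\<forall>k. h k > 0) \<and> h \<longlonglongrightarrow> 0 \<and> u \<longlonglongrightarrow> v \<and>
      (\<forall>k. z + h k *\<^sub>R u k \<in> S)}"

definition proper_eff :: "'b::euclidean_space set \<Rightarrow> 'b set \<Rightarrow> 'b set" where
  "proper_eff S P = {y \<in> eff S P. contingent (S \<oplus>s P) y \<inter> uminus ` P = {0}}"

definition gph :: "('a \<Rightarrow> 'b set) \<Rightarrow> ('a \<times> 'b) set" where
  "gph F = {(x, y). y \<in> F x}"

definition lipschitz_around :: "('a::real_normed_vector \<Rightarrow> 'b::real_normed_vector set) \<Rightarrow> 'a \<Rightarrow> bool" where
  "lipschitz_around F x \<longleftrightarrow> (\<exists>l>0. \<exists>U. open U \<and> x \<in> U \<and>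
     (\<forall>x1\<in>U. \<forall>x2\<in>U. F x1 \<subseteq> F x2 \<oplus>s cball 0 (l * norm (x1 - x2))))"

definition cder :: "('a::real_normed_vector \<Rightarrow> 'b::real_normed_vector set) \<Rightarrow> 'a \<times> 'b \<Rightarrow> 'a \<Rightarrow> 'b set" where
  "cder F xy v = {w. (v, w) \<in> contingent (gph F) xy}"

definition gen_epider :: "('a::real_normed_vector \<Rightarrow> 'b::euclidean_space set) \<Rightarrow> 'b set \<Rightarrow> 'a \<times> 'b \<Rightarrow> 'a \<Rightarrow> 'b set" where
  "gen_epider F P xy v = eff (cder (upper F P) xy v) P"

end

theory Submission
  imports Defs
begin

(*
  Write D(v) = DF_+((x,y);v) for the contingent derivative of the upper
  (epigraphical) map F_+ = F + P, and U = \<Union>_{(v,w)\<in>S} (w + E(D(v),P)), where E(.,P) denotes the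
  P-minimal points.

  1. The contingent cone of any set is closed; hence the graph of v \<mapsto> D(v) is closed.
  2. For a compact S and any set-valued map D with closed graph, the set
     \<Union>_{(v,w)\<in>S} (w + D(v)) is closed (extract a convergent subsequence of the (v,w)).
  3. D(v) is stable under adding elements of P, because F_+ already is.
  The hypothesis gives 0 = e + p with e \<in> cl U and p \<in> P.  Since minimal points of D(v)
  lie in D(v), U is contained in the closed set of step 2, so e = w + d with (v,w) \<in> S
  and d \<in> D(v); then -w = d + p \<in> D(v) by step 3.
*)

lemma contingent_iff:
  "v \<in> contingent S z \<longleftrightarrow>
    (\<forall>e>0. \<forall>d>0. \<exists>h u. 0 < h \<and> h < d \<and> dist u v < e \<and> z + h *\<^sub>R u \<in> S)"
proof
  assume "v \<in> contingent S z"
  then obtain h u where h: "\<forall>k. h k > 0" "h \<longlonglongrightarrow> 0" and u: "u \<longlonglongrightarrow> v"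
    and mem: "\<forall>k. z + h k *\<^sub>R u k \<in> S"
    unfolding contingent_def by blast
  show "\<forall>e>0. \<forall>d>0. \<exists>h u. 0 < h \<and> h < d \<and> dist u v < e \<and> z + h *\<^sub>R u \<in> S"
  proof (intro allI impI)
    fix e d :: real assume "e > 0" "d > 0"
    have "eventually (\<lambda>k. dist (h k) 0 < d \<and> dist (u k) v < e) sequentially"
      using tendstoD[OF h(2) \<open>d > 0\<close>] tendstoD[OF u \<open>e > 0\<close>] by (rule eventually_conj)
    then obtain k where "dist (h k) 0 < d" "dist (u k) v < e"
      unfolding eventually_sequentially by auto
    then show "\<exists>h u. 0 < h \<and> h < d \<and> dist u v < e \<and> z + h *\<^sub>R u \<in> S"
      using h(1) mem by (intro exI[of _ "h k"] exI[of _ "u k"]) (auto simp: dist_real_def)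
  qed
next
  assume approx: "\<forall>e>0. \<forall>d>0. \<exists>h u. 0 < h \<and> h < d \<and> dist u v < e \<and> z + h *\<^sub>R u \<in> S"
  have "\<forall>k. \<exists>h u. 0 < h \<and> h < inverse (real (Suc k)) \<and>
      dist u v < inverse (real (Suc k)) \<and> z + h *\<^sub>R u \<in> S"
  proof
    fix k :: nat
    have "inverse (real (Suc k)) > 0" by simp
    then show "\<exists>h u. 0 < h \<and> h < inverse (real (Suc k)) \<and>
        dist u v < inverse (real (Suc k)) \<and> z + h *\<^sub>R u \<in> S"
      using approx by blast
  qed
  then obtain h u where hu: "\<And>k. 0 < h k \<and> h k < inverse (real (Suc k)) \<and>
      dist (u k) v < inverse (real (Suc k)) \<and> z + h k *\<^sub>R u k \<in> S"
    by (metis (no_types))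
  have "h \<longlonglongrightarrow> 0"
  proof (rule tendsto_sandwich[OF _ _ tendsto_const LIMSEQ_inverse_real_of_nat])
    show "\<forall>\<^sub>F k in sequentially. 0 \<le> h k"
      by (rule always_eventually) (meson hu less_imp_le)
    show "\<forall>\<^sub>F k in sequentially. h k \<le> inverse (real (Suc k))"
      by (rule always_eventually) (meson hu less_imp_le)
  qed
  moreover have "(\<lambda>k. dist (u k) v) \<longlonglongrightarrow> 0"
  proof (rule tendsto_sandwich[OF _ _ tendsto_const LIMSEQ_inverse_real_of_nat])
    show "\<forall>\<^sub>F k in sequentially. 0 \<le> dist (u k) v"
      by simp
    show "\<forall>\<^sub>F k in sequentially. dist (u k) v \<le> inverse (real (Suc k))"
      by (rule always_eventually) (meson hu less_imp_le)
  qed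
  then have "u \<longlonglongrightarrow> v" using tendsto_dist_iff by blast
  ultimately show "v \<in> contingent S z"
    unfolding contingent_def using hu by blast
qed

text \<open>The contingent cone is closed: the approximate description above passes to limits.\<close>

lemma contingent_closed: "closed (contingent S z)"
proof -
  have "v \<in> contingent S z" if limit: "v \<in> closure (contingent S z)" for v
    unfolding contingent_iff
  proof (intro allI impI)
    fix e d :: real assume "e > 0" "d > 0"
    obtain v' where v': "v' \<in> contingent S z" "dist v' v < e/2"
      using limit \<open>e > 0\<close> unfolding closure_approachable by (meson half_gt_zero)
    obtain h u where "0 < h" "h < d" "dist u v' < e/2" "z + h *\<^sub>R u \<in> S"
      using v'(1) \<open>e > 0\<close> \<open>d > 0\<close> unfolding contingent_iff by (meson half_gt_zero)
    moreover have "dist u v < e"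
      using dist_triangle[of u v v'] \<open>dist u v' < e/2\<close> v'(2) by linarith
    ultimately show "\<exists>h u. 0 < h \<and> h < d \<and> dist u v < e \<and> z + h *\<^sub>R u \<in> S" by blast
  qed
  then show ?thesis
    by (meson closure_subset_eq subsetI)
qed

lemma cder_graph_closed: "closed {(v, d). d \<in> cder G xy v}"
  using contingent_closed[of "gph G" xy] by (simp add: cder_def)

lemma closed_translated_union:
  fixes S :: "('a::real_normed_vector \<times> 'b::real_normed_vector) set" and D :: "'a \<Rightarrow> 'b set"
  assumes "compact S" and graph: "closed {(v, d). d \<in> D v}"
  shows "closed (\<Union>(v, w)\<in>S. {w} \<oplus>s D v)"
  unfolding closed_sequential_limits
proof (intro allI impI, elim conjE)
  fix f e assume mem: "\<forall>n. f n \<in> (\<Union>(v, w)\<in>S. {w} \<oplus>s D v)" and "f \<longlonglongrightarrow> e"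
  have "\<forall>n. \<exists>vw d. vw \<in> S \<and> d \<in> D (fst vw) \<and> f n = snd vw + d"
    using mem by (fastforce simp: setplus_def)
  then obtain vw d where vw: "\<And>n. vw n \<in> S" and d: "\<And>n. d n \<in> D (fst (vw n))"
    and f: "\<And>n. f n = snd (vw n) + d n"
    by metis
  obtain v w r where "(v, w) \<in> S" "strict_mono r" and lim: "(vw \<circ> r) \<longlonglongrightarrow> (v, w)"
    using compact_imp_seq_compact[OF \<open>compact S\<close>] vw by (metis seq_compactE surj_pair)
  have "(f \<circ> r) \<longlonglongrightarrow> e"
    using \<open>f \<longlonglongrightarrow> e\<close> \<open>strict_mono r\<close> by (rule LIMSEQ_subseq_LIMSEQ)
  moreover have "(\<lambda>n. vw (r n)) \<longlonglongrightarrow> (v, w)"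
    using lim by (simp add: o_def)
  ultimately have "(\<lambda>n. (fst (vw (r n)), f (r n) - snd (vw (r n)))) \<longlonglongrightarrow> (fst (v, w), e - snd (v, w))"
    unfolding o_def by (intro tendsto_Pair tendsto_diff tendsto_fst tendsto_snd)
  then have "(\<lambda>n. (fst (vw (r n)), f (r n) - snd (vw (r n)))) \<longlonglongrightarrow> (v, e - w)"
    by simp
  then have "(\<lambda>n. (fst (vw (r n)), d (r n))) \<longlonglongrightarrow> (v, e - w)"
    by (simp add: f)
  then have "e - w \<in> D v"
    using closed_sequentially[OF graph] d by fastforce
  then show "e \<in> (\<Union>(v, w)\<in>S. {w} \<oplus>s D v)"
    using \<open>(v, w) \<in> S\<close> unfolding setplus_def by force
qed

text \<open>The contingent derivative of the upper map \<open>F + P\<close> absorbs the convex cone \<open>P\<close>: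
  moving the approximating points of the graph up by \<open>h\<^sub>k q\<close> keeps them in the graph.\<close>

lemma cder_upper_add_cone:
  assumes "convex P" "cone P" "d \<in> cder (upper F P) xy v" "q \<in> P"
  shows "d + q \<in> cder (upper F P) xy v"
proof -
  have add: "a + b \<in> P" if "a \<in> P" "b \<in> P" for a b
    using assms(1,2) that convex_cone by blast
  have scale: "c *\<^sub>R a \<in> P" if "a \<in> P" "c \<ge> 0" for a c
    using assms(2) that unfolding cone_def by blast
  obtain h u where h: "\<forall>k. h k > 0" "h \<longlonglongrightarrow> 0" and u: "u \<longlonglongrightarrow> (v, d)"
    and mem: "\<forall>k. xy + h k *\<^sub>R u k \<in> gph (upper F P)"
    using assms(3) unfolding cder_def contingent_def by blast
  have "(\<lambda>k. u k + (0, q)) \<longlonglongrightarrow> (v, d) + (0, q)"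
    by (intro tendsto_add u tendsto_const)
  then have lim: "(\<lambda>k. u k + (0, q)) \<longlonglongrightarrow> (v, d + q)" by simp
  have "xy + h k *\<^sub>R (u k + (0, q)) \<in> gph (upper F P)" for k
  proof -
    obtain x' y' where xy': "xy + h k *\<^sub>R u k = (x', y')" by fastforce
    then obtain a b where "a \<in> F x'" "b \<in> P" "y' = a + b"
      using mem[rule_format, of k] unfolding gph_def upper_def setplus_def by force
    moreover have "b + h k *\<^sub>R q \<in> P"
      using add scale \<open>b \<in> P\<close> assms(4) h(1) less_imp_le by metis
    moreover have "xy + h k *\<^sub>R (u k + (0, q)) = (xy + h k *\<^sub>R u k) + (0, h k *\<^sub>R q)"
      by (simp add: scaleR_add_right add.assoc)
    then have "xy + h k *\<^sub>R (u k + (0, q)) = (x', a + (b + h k *\<^sub>R q))"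
      using xy' \<open>y' = a + b\<close> by (simp add: add.assoc)
    ultimately show ?thesis unfolding gph_def upper_def setplus_def by auto
  qed
  then show ?thesis
    unfolding cder_def contingent_def using h lim by blast
qed

theorem proposition6p9:
  fixes F :: "'a::real_normed_vector \<Rightarrow> 'b::euclidean_space set"
    and P :: "'b set" and x :: 'a and y :: 'b and S :: "('a \<times> 'b) set"
  assumes "ordering_cone P"
    and "(x, y) \<in> gph F"
    and "lipschitz_around F x"
    and "y \<in> proper_eff (F x) P"
    and "compact S" and "S \<noteq> {}"
    and "0 \<in> eff (closure (\<Union>(v, w)\<in>S. {w} \<oplus>s gen_epider F P (x, y) v)) P \<oplus>s P"
  shows "\<exists>(v, w)\<in>S. - w \<in> cder (upper F P) (x, y) v"
proof -
  let ?D = "cder (upper F P) (x, y)"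
  let ?V = "\<Union>(v, w)\<in>S. {w} \<oplus>s ?D v"
  obtain e p where e: "e \<in> closure (\<Union>(v, w)\<in>S. {w} \<oplus>s gen_epider F P (x, y) v)"
    and "p \<in> P" "e + p = 0"
    using assms(7) unfolding setplus_def eff_def by auto
  have "(\<Union>(v, w)\<in>S. {w} \<oplus>s gen_epider F P (x, y) v) \<subseteq> ?V"
    unfolding gen_epider_def eff_def setplus_def by blast
  moreover have "closed ?V"
    using closed_translated_union[OF assms(5) cder_graph_closed] .
  ultimately have "e \<in> ?V"
    using e closure_minimal by blast
  then obtain v w d where "(v, w) \<in> S" "d \<in> ?D v" "e = w + d"
    unfolding setplus_def by blast
  moreover have "d + p \<in> ?D v"
    using assms(1) \<open>d \<in> ?D v\<close> \<open>p \<in> P\<close>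
    by (intro cder_upper_add_cone) (auto simp: ordering_cone_def)
  moreover have "d + p = - w"
    using \<open>e + p = 0\<close> \<open>e = w + d\<close> by (simp add: algebra_simps eq_neg_iff_add_eq_0)
  ultimately show ?thesis by auto
qed

end
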